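(* Let $n,m,k,l$ be non-negative integers with $m,k\le n$ and $m+k-n\le l\le\min(m,k)$. Then $p(x\mid n,m,k,l)=0$ for every integer $x$ with $\min(m,\,n-m,\,k)<x\le\lfloor n/2\rfloor$.
   Context: Let $M:=m-l$, $N:=n-m-k+l$. Let $\mathbb{C}^2$ have orthonormal basis $|0\rangle,|1\rangle$ and give $(\mathbb{C}^2)^{\otimes n}$ the induced Hermitian inner product. Define $|\Xi_{n,m|k,l}\rangle:=|1\rangle^{\otimes l}\otimes|0\rangle^{\otimes(k-l)}\otimes\binom{M+N}{M}^{-1/2}\sum_{I}|I\rangle$, the sum over all $I\in\{0,1\}^{n-k}$ with exactly $M$ ones (where $|i_1\cdots i_r\rangle=|i_1\rangle\otimes\cdots\otimes|i_r\rangle$). $\mathfrak S_n$ acts on $(\mathbb{C}^2)^{\otimes n}$ by permuting tensor factors. For $0\le x\le\lfloor n/2\rfloor$, $\mathsf P_{(n-x,x)}$ is the orthogonal projection onto the isotypic component of the irreducible $\mathfrak S_n$-representation labelled by the partition $(n-x,x)$, and $p(x\mid n,m,k,l):=\langle\Xi_{n,m|k,l}|\mathsf P_{(n-x,x)}|\Xi_{n,m|k,l}\rangle$. *)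

theory Defs
  imports Complex_Main "HOL-Combinatorics.Permutations"
begin

text \<open>Vectors of (C^2)^(tensor n) are represented as functions from bit strings
  (bool lists, True = |1>, False = |0>) to complex amplitudes; only strings of
  length n are relevant.\<close>

definition strings :: "nat \<Rightarrow> bool list set" where
  "strings n = {b. length b = n}"

definition tvecs :: "nat \<Rightarrow> (bool list \<Rightarrow> complex) set" where
  "tvecs n = {\<psi>. \<forall>b. length b \<noteq> n \<longrightarrow> \<psi> b = 0}"

definition tinner :: "nat \<Rightarrow> (bool list \<Rightarrow> complex) \<Rightarrow> (bool list \<Rightarrow> complex) \<Rightarrow> complex" where
  "tinner n \<phi> \<psi> = (\<Sum>b\<in>strings n. cnj (\<phi> b) * \<psi> b)"

text \<open>Action of a permutation of the tensor factors {0..<n}; this is a left action: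
  act n s (act n t \<psi>) = act n (s o t) \<psi>.\<close>
definition act :: "nat \<Rightarrow> (nat \<Rightarrow> nat) \<Rightarrow> (bool list \<Rightarrow> complex) \<Rightarrow> (bool list \<Rightarrow> complex)" where
  "act n s \<psi> = (\<lambda>b. if length b = n then \<psi> (map (\<lambda>i. b ! s i) [0..<n]) else 0)"

definition perms :: "nat \<Rightarrow> (nat \<Rightarrow> nat) set" where
  "perms n = {s. s permutes {..<n}}"

text \<open>Canonical Young tableau of shape (n-x, x): first row 0..n-x-1, second row
  n-x..n-1; column of entry i.\<close>
definition tab_col :: "nat \<Rightarrow> nat \<Rightarrow> nat \<Rightarrow> nat" where
  "tab_col n x i = (if i < n - x then i else i - (n - x))"

definition row_group :: "nat \<Rightarrow> nat \<Rightarrow> (nat \<Rightarrow> nat) set" where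
  "row_group n x = {s \<in> perms n. s ` {..<n - x} = {..<n - x}}"

definition col_group :: "nat \<Rightarrow> nat \<Rightarrow> (nat \<Rightarrow> nat) set" where
  "col_group n x = {s \<in> perms n. \<forall>i<n. tab_col n x (s i) = tab_col n x i}"

text \<open>Action of the Young symmetrizer c = b a, a = sum of row permutations,
  b = signed sum of column permutations.\<close>
definition young_sym :: "nat \<Rightarrow> nat \<Rightarrow> (bool list \<Rightarrow> complex) \<Rightarrow> (bool list \<Rightarrow> complex)" where
  "young_sym n x \<psi> = (\<lambda>b. \<Sum>q\<in>col_group n x. of_int (sign q) *
      act n q (\<lambda>c. \<Sum>p\<in>row_group n x. act n p \<psi> c) b)"

text \<open>Isotypic component of the irrep (n-x,x): the image of (C^2)^(tensor n) under the
  two-sided ideal of C[S_n] generated by the Young symmetrizer, i.e. the span of all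
  s (c v) (linear combinations are absorbed into v since c is linear).\<close>
definition isotypic :: "nat \<Rightarrow> nat \<Rightarrow> (bool list \<Rightarrow> complex) set" where
  "isotypic n x = {\<phi>. \<exists>\<Psi>. (\<forall>s. \<Psi> s \<in> tvecs n) \<and>
      \<phi> = (\<lambda>b. \<Sum>s\<in>perms n. act n s (young_sym n x (\<Psi> s)) b)}"

definition proj_iso :: "nat \<Rightarrow> nat \<Rightarrow> (bool list \<Rightarrow> complex) \<Rightarrow> (bool list \<Rightarrow> complex)" where
  "proj_iso n x \<psi> = (THE w. w \<in> isotypic n x \<and>
      (\<forall>\<phi>\<in>isotypic n x. tinner n \<phi> (\<lambda>b. \<psi> b - w b) = 0))"

text \<open>The state Xi_{n,m|k,l}, with M = m - l, N = n - m - k + l.\<close>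
definition Xi :: "nat \<Rightarrow> nat \<Rightarrow> nat \<Rightarrow> nat \<Rightarrow> bool list \<Rightarrow> complex" where
  "Xi n m k l = (\<lambda>b. if length b = n \<and> take l b = replicate l True
       \<and> take (k - l) (drop l b) = replicate (k - l) False
       \<and> count_list (drop k b) True = m - l
     then complex_of_real (1 / sqrt (real ((m - l + (n - m - k + l)) choose (m - l))))
     else 0)"

definition pxi :: "nat \<Rightarrow> nat \<Rightarrow> nat \<Rightarrow> nat \<Rightarrow> nat \<Rightarrow> complex" where
  "pxi x n m k l = tinner n (Xi n m k l) (proj_iso n x (Xi n m k l))"

end

theory Submission
  imports Defs
begin

text \<open>The projection of \<open>Xi\<close> vanishes because \<open>Xi\<close> is orthogonal to every vector \<open>s (c v)\<close>
  spanning the isotypic component. The vector \<open>c v = b a v\<close> changes sign under every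
  transposition inside a column of the tableau, so it vanishes on basis strings carrying equal
  letters in two cells of one column. If \<open>m < x\<close> or \<open>n - m < x\<close>, then some letter occurs more
  than \<open>n - x\<close> times in every string of weight \<open>m\<close>, and by pigeonhole two of its occurrences
  share one of the \<open>n - x\<close> columns. If \<open>k < x\<close>, then \<open>Xi\<close> is symmetric in its last \<open>n - k > n - x\<close>
  positions, two of which are moved by \<open>s\<close> into one column; the transposition of these two
  positions fixes \<open>Xi\<close> and reverses the sign of \<open>s (c v)\<close>.\<close>

lemma act_eq_permute_list:
  "act n s \<psi> b = (if length b = n then \<psi> (permute_list s b) else 0)"
  by (simp add: act_def permute_list_def)

lemma act_comp:
  assumes "t permutes {..<n}"
  shows "act n s (act n t \<psi>) = act n (s \<circ> t) \<psi>"
  using assms by (simp add: fun_eq_iff act_eq_permute_list permute_list_compose)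

lemma act_uminus: "act n s (\<lambda>b. - \<psi> b) = (\<lambda>b. - act n s \<psi> b)"
  by (simp add: fun_eq_iff act_def)

lemma act_sum: "act n s (\<lambda>b. \<Sum>i\<in>I. f i b) = (\<lambda>b. \<Sum>i\<in>I. act n s (f i) b)"
  by (simp add: fun_eq_iff act_def)

lemma act_scale: "act n s (\<lambda>b. c * \<psi> b) = (\<lambda>b. c * act n s \<psi> b)"
  by (simp add: fun_eq_iff act_def)

lemma finite_strings [simp]: "finite (strings n)"
  using finite_lists_length_eq[of "UNIV :: bool set" n] by (simp add: strings_def)

lemma bij_betw_permute_list_strings:
  assumes "s permutes {..<n}"
  shows "bij_betw (permute_list s) (strings n) (strings n)"
proof (rule bij_betw_byWitness[where f' = "permute_list (inv s)"])
  have "permute_list (inv s) (permute_list s b) = b" if "length b = n" for b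
    using that assms permutes_inv[OF assms]
    by (metis permute_list_compose permute_list_id permutes_inv_o(1))
  moreover have "permute_list s (permute_list (inv s) b) = b" if "length b = n" for b
    using that assms by (metis permute_list_compose permute_list_id permutes_inv_o(2))
  ultimately show "\<forall>b\<in>strings n. permute_list (inv s) (permute_list s b) = b"
    "\<forall>b\<in>strings n. permute_list s (permute_list (inv s) b) = b"
    by (auto simp: strings_def)
qed (auto simp: strings_def)

lemma tinner_act_act:
  assumes "s permutes {..<n}"
  shows "tinner n (act n s \<phi>) (act n s \<psi>) = tinner n \<phi> \<psi>"
proof -
  have "tinner n (act n s \<phi>) (act n s \<psi>) =
      (\<Sum>b\<in>strings n. cnj (\<phi> (permute_list s b)) * \<psi> (permute_list s b))"
    unfolding tinner_def by (intro sum.cong) (auto simp: act_eq_permute_list strings_def)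
  also have "\<dots> = tinner n \<phi> \<psi>"
    unfolding tinner_def
    using sum.reindex_bij_betw[OF bij_betw_permute_list_strings[OF assms]] by simp
  finally show ?thesis .
qed

lemma tinner_commute: "tinner n \<psi> \<phi> = cnj (tinner n \<phi> \<psi>)"
  by (simp add: tinner_def mult.commute)

lemma tinner_uminus_right: "tinner n \<phi> (\<lambda>b. - \<psi> b) = - tinner n \<phi> \<psi>"
  by (simp add: tinner_def sum_negf)

lemma tinner_diff_right: "tinner n \<phi> (\<lambda>b. \<psi> b - \<chi> b) = tinner n \<phi> \<psi> - tinner n \<phi> \<chi>"
  by (simp add: tinner_def right_diff_distrib sum_subtractf)

lemma tinner_sum_right: "tinner n \<phi> (\<lambda>b. \<Sum>i\<in>I. f i b) = (\<Sum>i\<in>I. tinner n \<phi> (f i))"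
  by (simp add: tinner_def sum_distrib_left sum.swap[of _ "strings n"])

lemma tinner_self_eq_0_iff:
  assumes "w \<in> tvecs n"
  shows "tinner n w w = 0 \<longleftrightarrow> w = (\<lambda>_. 0)"
proof
  assume "tinner n w w = 0"
  moreover have "tinner n w w = of_real (\<Sum>b\<in>strings n. (cmod (w b))\<^sup>2)"
    unfolding tinner_def of_real_sum by (simp add: complex_norm_square mult.commute del: of_real_power)
  ultimately have "(\<Sum>b\<in>strings n. (cmod (w b))\<^sup>2) = 0"
    by (metis of_real_eq_0_iff)
  then have "w b = 0" if "b \<in> strings n" for b
    using that by (subst (asm) sum_nonneg_eq_0_iff) auto
  with assms show "w = (\<lambda>_. 0)"
    by (auto simp: fun_eq_iff tvecs_def strings_def)
qed (simp add: tinner_def)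

lemma col_group_permutes: "q \<in> col_group n x \<Longrightarrow> q permutes {..<n}"
  by (simp add: col_group_def perms_def)

lemma col_group_comp:
  assumes "s \<in> col_group n x" "t \<in> col_group n x"
  shows "s \<circ> t \<in> col_group n x"
  using assms permutes_in_image[OF col_group_permutes[OF assms(2)]]
  by (auto simp: col_group_def perms_def intro: permutes_compose)

lemma transpose_in_col_group:
  assumes "i < n" "j < n" "tab_col n x i = tab_col n x j"
  shows "transpose i j \<in> col_group n x"
  using assms by (auto simp: col_group_def perms_def transpose_def intro!: permutes_swap_id)

lemma sign_transpose_comp:
  assumes "q \<in> col_group n x" "i \<noteq> j"
  shows "sign (transpose i j \<circ> q) = - sign q"
proof -
  have "permutation q"
    using col_group_permutes[OF assms(1)] permutation_permutes by blast
  then show ?thesis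
    using assms(2) by (simp add: sign_compose permutation_swap_id sign_swap_id)
qed

lemma act_transpose_young_sym:
  assumes "i < n" "j < n" "i \<noteq> j" "tab_col n x i = tab_col n x j"
  shows "act n (transpose i j) (young_sym n x \<Psi>) = (\<lambda>b. - young_sym n x \<Psi> b)"
proof -
  define t where "t = transpose i j"
  define a where "a = (\<lambda>c. \<Sum>p\<in>row_group n x. act n p \<Psi> c)"
  have t: "t \<in> col_group n x" "t \<circ> (t \<circ> q) = q" for q
    using transpose_in_col_group[OF assms(1,2,4)] by (simp_all add: t_def flip: comp_assoc)
  have "act n t (young_sym n x \<Psi>) =
      (\<lambda>b. \<Sum>q\<in>col_group n x. of_int (sign q) * act n (t \<circ> q) a b)"
    unfolding young_sym_def a_def[symmetric] act_sum act_scale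
    by (intro ext sum.cong) (simp_all add: act_comp col_group_permutes)
  also have "\<dots> = (\<lambda>b. \<Sum>q\<in>col_group n x. of_int (sign (t \<circ> q)) * act n q a b)"
    by (intro ext sum.reindex_bij_witness[where i = "(\<circ>) t" and j = "(\<circ>) t"])
      (simp_all add: t col_group_comp)
  also have "\<dots> = (\<lambda>b. - young_sym n x \<Psi> b)"
    using assms(3) by (simp add: sign_transpose_comp young_sym_def a_def t_def sum_negf)
  finally show ?thesis
    by (simp add: t_def)
qed

lemma young_sym_eq_0_if_column_repeats:
  assumes "i < n" "j < n" "i \<noteq> j" "tab_col n x i = tab_col n x j" "b ! i = b ! j"
  shows "young_sym n x \<Psi> b = 0"
proof (cases "length b = n")
  case True
  have "permute_list (transpose i j) b = b"
  proof (rule nth_equalityI)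
    fix r assume "r < length (permute_list (transpose i j) b)"
    then show "permute_list (transpose i j) b ! r = b ! r"
      using assms(1,2,5) True by (simp add: permute_list_nth permutes_swap_id transpose_def)
  qed simp
  then have "young_sym n x \<Psi> b = - young_sym n x \<Psi> b"
    using fun_cong[OF act_transpose_young_sym[OF assms(1-4)], of \<Psi> b] True
    by (simp add: act_eq_permute_list)
  then show ?thesis
    by simp
qed (simp add: young_sym_def act_def)

lemma obtain_column_pair:
  assumes "x \<le> n div 2" "P \<subseteq> {..<n}" "n - x < card P"
  obtains i j where "i \<in> P" "j \<in> P" "i \<noteq> j" "tab_col n x i = tab_col n x j"
proof -
  have "x \<le> n - x"
    using assms(1) by linarith
  then have "tab_col n x ` P \<subseteq> {..<n - x}"
    using assms(2) by (auto simp: tab_col_def)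
  then have "card (tab_col n x ` P) \<le> n - x"
    using card_mono[of "{..<n - x}"] by fastforce
  then have "card (tab_col n x ` P) < card P"
    using assms(3) by linarith
  then have "\<not> inj_on (tab_col n x) P"
    using card_image by fastforce
  then show ?thesis
    using that unfolding inj_on_def by blast
qed

lemma young_sym_eq_0_if_count_list_gt:
  assumes "length b = n" "x \<le> n div 2" "n - x < count_list b v"
  shows "young_sym n x \<Psi> b = 0"
proof -
  define P where "P = {r. r < n \<and> b ! r = v}"
  have "count_list b v = card P"
    using assms(1) by (simp add: P_def count_list_eq_length_filter length_filter_conv_card eq_commute)
  moreover have "P \<subseteq> {..<n}"
    by (auto simp: P_def)
  ultimately obtain i j where "i \<in> P" "j \<in> P" "i \<noteq> j" "tab_col n x i = tab_col n x j"
    using obtain_column_pair[OF assms(2)] assms(3) by metis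
  then show ?thesis
    by (auto simp: P_def intro: young_sym_eq_0_if_column_repeats)
qed

lemma count_list_True_False: "count_list bs True + count_list bs False = length bs"
  by (induction bs) auto

lemma count_list_permute_list:
  assumes "s permutes {..<length xs}"
  shows "count_list (permute_list s xs) v = count_list xs v"
  using mset_permute_list[OF assms] by (metis count_mset)

lemma Xi_cong:
  assumes "length b = length b'" "take k b = take k b'" "mset (drop k b) = mset (drop k b')" "l \<le> k"
  shows "Xi n m k l b = Xi n m k l b'"
proof -
  have "take l b = take l b'" "take (k - l) (drop l b) = take (k - l) (drop l b')"
    using assms(2,4) by (metis min_absorb1 take_take, metis le_add_diff_inverse2 take_drop)
  moreover have "count_list (drop k b) True = count_list (drop k b') True"
    using assms(3) by (metis count_mset)
  ultimately show ?thesis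
    using assms(1) by (simp add: Xi_def)
qed

lemma Xi_nonzeroD:
  assumes "Xi n m k l b \<noteq> 0" "l \<le> k" "l \<le> m"
  shows "length b = n" "count_list b True = m"
proof -
  have b: "length b = n" "take l b = replicate l True" "take (k - l) (drop l b) = replicate (k - l) False"
    "count_list (drop k b) True = m - l"
    using assms(1) by (auto simp: Xi_def split: if_splits)
  have "b = take l b @ take (k - l) (drop l b) @ drop k b"
    using assms(2) by (metis append_take_drop_id drop_drop le_add_diff_inverse2)
  then have "count_list b True =
      count_list (take l b) True + count_list (take (k - l) (drop l b)) True + count_list (drop k b) True"
    by (metis count_list_append add.assoc)
  moreover have "count_list (replicate r v) True = (if v then r else 0)" for r v
    by (induction r) auto
  ultimately have "count_list b True = l + (m - l)"
    using b by simp
  then show "length b = n" "count_list b True = m"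
    using b(1) assms(3) by simp_all
qed

lemma act_Xi:
  assumes "\<sigma> permutes {k..<n}" "l \<le> k"
  shows "act n \<sigma> (Xi n m k l) = Xi n m k l"
proof
  fix b :: "bool list"
  show "act n \<sigma> (Xi n m k l) b = Xi n m k l b"
  proof (cases "length b = n")
    case True
    define b' where "b' = permute_list \<sigma> b"
    have \<sigma>: "\<sigma> permutes {..<length b}"
      using True by (intro permutes_subset[OF assms(1)]) auto
    have "take k b' = take k b"
      using True permutes_not_in[OF assms(1)]
      by (intro nth_equalityI) (auto simp: b'_def permute_list_nth[OF \<sigma>])
    moreover have "mset (take k b') + mset (drop k b') = mset (take k b) + mset (drop k b)"
      using mset_permute_list[OF \<sigma>] by (simp add: b'_def flip: mset_append)
    ultimately have "Xi n m k l b' = Xi n m k l b"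
      by (intro Xi_cong) (simp_all add: b'_def assms(2))
    then show ?thesis
      using True by (simp add: act_eq_permute_list b'_def)
  qed (simp add: act_def Xi_def)
qed

lemma tinner_Xi_act_young_sym_if_weight:
  assumes "l \<le> k" "l \<le> m" "m \<le> n" "x \<le> n div 2" "m < x \<or> n - m < x"
    and "s permutes {..<n}"
  shows "tinner n (Xi n m k l) (act n s (young_sym n x \<Psi>)) = 0"
  unfolding tinner_def
proof (intro sum.neutral ballI)
  fix b assume "b \<in> strings n"
  show "cnj (Xi n m k l b) * act n s (young_sym n x \<Psi>) b = 0"
  proof (cases "Xi n m k l b = 0")
    case False
    define g where "g = permute_list s b"
    have b: "length b = n" "count_list b True = m"
      using Xi_nonzeroD[OF False assms(1,2)] by simp_all
    then have g: "count_list g True = m" "count_list g False = n - m" "length g = n"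
      using count_list_True_False[of g] assms(6)
      by (simp_all add: g_def count_list_permute_list)
    obtain v where "n - x < count_list g v"
    proof (cases "m < x")
      case True
      have "x \<le> n"
        using assms(4) by simp
      with True g(2) have "n - x < count_list g False"
        by linarith
      then show ?thesis
        by (rule that)
    next
      case False
      with assms(5) g(1) have "n - x < count_list g True"
        by linarith
      then show ?thesis
        by (rule that)
    qed
    then have "young_sym n x \<Psi> g = 0"
      using young_sym_eq_0_if_count_list_gt[OF g(3) assms(4)] by blast
    then show ?thesis
      using b(1) by (simp add: act_eq_permute_list g_def)
  qed simp
qed

lemma tinner_Xi_act_young_sym_if_short_prefix:
  assumes "l \<le> k" "k < x" "x \<le> n div 2" "s permutes {..<n}"
  shows "tinner n (Xi n m k l) (act n s (young_sym n x \<Psi>)) = 0"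
proof -
  define P where "P = inv s ` {k..<n}"
  have inv_s: "inv s permutes {..<n}"
    using permutes_inv[OF assms(4)] .
  have P: "P \<subseteq> {..<n}" "card P = n - k"
    using permutes_in_image[OF inv_s] card_image[OF permutes_inj_on[OF inv_s]]
    by (auto simp: P_def)
  moreover have "n - x < n - k"
    using assms(2,3) by linarith
  ultimately obtain i j where ij: "i \<in> P" "j \<in> P" "i \<noteq> j" "tab_col n x i = tab_col n x j"
    using obtain_column_pair[OF assms(3)] by metis
  define t where "t = transpose i j"
  define \<sigma> where "\<sigma> = transpose (s i) (s j)"
  have "s i \<in> {k..<n}" "s j \<in> {k..<n}" "i < n" "j < n"
    using ij(1,2) P(1) permutes_inverses(1)[OF assms(4)] by (auto simp: P_def)
  then have \<sigma>: "\<sigma> permutes {k..<n}" "\<sigma> permutes {..<n}"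
    by (simp_all add: \<sigma>_def permutes_swap_id)
  have t: "t permutes {..<n}"
    using \<open>i < n\<close> \<open>j < n\<close> by (simp add: t_def permutes_swap_id)
  have "\<sigma> \<circ> s = s \<circ> t"
    using permutes_bij[OF assms(4)] permutes_inverses(2)[OF assms(4)]
    by (simp add: \<sigma>_def t_def transpose_comp_eq)
  let ?X = "Xi n m k l" and ?Y = "young_sym n x \<Psi>"
  have "tinner n ?X (act n s ?Y) = tinner n (act n \<sigma> ?X) (act n \<sigma> (act n s ?Y))"
    using \<sigma>(2) by (simp add: tinner_act_act)
  also have "\<dots> = tinner n ?X (act n s (act n t ?Y))"
    using \<sigma> t assms(1,4) \<open>\<sigma> \<circ> s = s \<circ> t\<close> by (simp add: act_Xi act_comp)
  also have "\<dots> = - tinner n ?X (act n s ?Y)"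
    using ij \<open>i < n\<close> \<open>j < n\<close>
    by (simp add: t_def act_transpose_young_sym act_uminus tinner_uminus_right)
  finally show ?thesis
    by simp
qed

lemma isotypic_subset_tvecs: "isotypic n x \<subseteq> tvecs n"
  by (auto simp: isotypic_def tvecs_def act_def)

lemma zero_in_isotypic: "(\<lambda>_. 0) \<in> isotypic n x"
  unfolding isotypic_def
  by (intro CollectI exI[where x = "\<lambda>_ _. 0"]) (simp add: tvecs_def young_sym_def act_def)

lemma tinner_isotypic_eq_0:
  assumes "\<And>s \<Psi>. s permutes {..<n} \<Longrightarrow> tinner n \<psi> (act n s (young_sym n x \<Psi>)) = 0"
    and "\<phi> \<in> isotypic n x"
  shows "tinner n \<psi> \<phi> = 0"
proof -
  obtain \<Psi> where "\<phi> = (\<lambda>b. \<Sum>s\<in>perms n. act n s (young_sym n x (\<Psi> s)) b)"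
    using assms(2) by (auto simp: isotypic_def)
  then show ?thesis
    using assms(1) by (simp add: tinner_sum_right perms_def)
qed

lemma proj_iso_eq_0_if_orthogonal:
  assumes "\<And>\<phi>. \<phi> \<in> isotypic n x \<Longrightarrow> tinner n \<psi> \<phi> = 0"
  shows "proj_iso n x \<psi> = (\<lambda>_. 0)"
  unfolding proj_iso_def
proof (rule the_equality)
  show "(\<lambda>_. 0) \<in> isotypic n x \<and> (\<forall>\<phi>\<in>isotypic n x. tinner n \<phi> (\<lambda>b. \<psi> b - 0) = 0)"
    using zero_in_isotypic assms by (subst tinner_commute) simp
next
  fix w assume w: "w \<in> isotypic n x \<and> (\<forall>\<phi>\<in>isotypic n x. tinner n \<phi> (\<lambda>b. \<psi> b - w b) = 0)"
  then have "tinner n w \<psi> - tinner n w w = 0"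
    by (simp flip: tinner_diff_right)
  moreover have "tinner n w \<psi> = 0"
    using assms w by (subst tinner_commute) simp
  moreover have "w \<in> tvecs n"
    using w isotypic_subset_tvecs by blast
  ultimately show "w = (\<lambda>_. 0)"
    by (simp add: tinner_self_eq_0_iff)
qed

lemma tinner_Xi_act_young_sym:
  assumes "m \<le> n" "l \<le> min m k" "min (min m (n - m)) k < x" "x \<le> n div 2"
    and "s permutes {..<n}"
  shows "tinner n (Xi n m k l) (act n s (young_sym n x \<Psi>)) = 0"
proof (cases "k < x")
  case True
  then show ?thesis
    using assms(2,4,5) tinner_Xi_act_young_sym_if_short_prefix by simp
next
  case False
  then have "m < x \<or> n - m < x"
    using assms(3) by linarith
  then show ?thesis
    using assms(1,2,4,5) tinner_Xi_act_young_sym_if_weight by simp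
qed

theorem corollary4p11:
  fixes n m k l x :: nat
  assumes "m \<le> n" and "k \<le> n"
    and "m + k \<le> n + l" and "l \<le> min m k"
    and "min (min m (n - m)) k < x" and "x \<le> n div 2"
  shows "pxi x n m k l = 0"
proof -
  \<comment> \<open>\<open>k \<le> n\<close> and \<open>m + k \<le> n + l\<close> only ensure \<open>Xi \<noteq> 0\<close>; the vanishing does not need them.\<close>
  have "proj_iso n x (Xi n m k l) = (\<lambda>_. 0)"
    by (rule proj_iso_eq_0_if_orthogonal[OF tinner_isotypic_eq_0])
      (rule tinner_Xi_act_young_sym[OF assms(1,4-6)])
  then show ?thesis
    by (simp add: pxi_def tinner_def)
qed

end
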